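(* Let $\Gamma$ be a finite simple graph with $n$ vertices and let $v_1,\dots,v_k$ be distinct vertices of $\Gamma$, each of full degree (i.e. each adjacent to all other vertices of $\Gamma$). Then $n^k$ divides $\det(\mathbf{J}+\mathbf{Q})$.
   Context: $\mathbf{J}$ is the $n\times n$ matrix all of whose entries are $1$. $\mathbf{Q}=\mathbf{\Delta}-\mathbf{A}$ is the Laplacian matrix of $\Gamma$, where $\mathbf{A}$ is the adjacency matrix of $\Gamma$ and $\mathbf{\Delta}$ is the diagonal matrix whose $i$-th diagonal entry is the degree of the $i$-th vertex. *)

theory Defs
  imports "HOL-Analysis.Analysis"
begin

definition simple_graph :: "('n::finite \<Rightarrow> 'n \<Rightarrow> bool) \<Rightarrow> bool" where
  "simple_graph E \<longleftrightarrow> (\<forall>u v. E u v \<longleftrightarrow> E v u) \<and> (\<forall>u. \<not> E u u)"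

definition degree :: "('n::finite \<Rightarrow> 'n \<Rightarrow> bool) \<Rightarrow> 'n \<Rightarrow> nat" where
  "degree E v = card {u. E v u}"

definition adj_matrix :: "('n::finite \<Rightarrow> 'n \<Rightarrow> bool) \<Rightarrow> int ^ 'n ^ 'n" where
  "adj_matrix E = (\<chi> i j. if E i j then 1 else 0)"

definition degree_matrix :: "('n::finite \<Rightarrow> 'n \<Rightarrow> bool) \<Rightarrow> int ^ 'n ^ 'n" where
  "degree_matrix E = (\<chi> i j. if i = j then int (degree E i) else 0)"

definition laplacian :: "('n::finite \<Rightarrow> 'n \<Rightarrow> bool) \<Rightarrow> int ^ 'n ^ 'n" where
  "laplacian E = degree_matrix E - adj_matrix E"

definition all_ones :: "int ^ 'n::finite ^ 'n" where
  "all_ones = (\<chi> i j. 1)"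

end

theory Submission
  imports Defs
begin

text \<open>A vertex adjacent to all others has degree \<open>n - 1\<close>, so its row in \<open>J + Q\<close> is \<open>n\<close> times a
  unit vector. Every term of the Leibniz expansion of the determinant picks one entry from each
  of the \<open>k\<close> such rows and is therefore divisible by \<open>n\<^sup>k\<close>.\<close>

lemma pow_card_dvd_det_if_rows_dvd:
  fixes A :: "'a::comm_ring_1 ^ 'n::finite ^ 'n"
  assumes "\<And>i j. i \<in> S \<Longrightarrow> c dvd A $ i $ j"
  shows "c ^ card S dvd det A"
proof -
  have "c ^ card S dvd (\<Prod>i\<in>UNIV. A $ i $ p i)" for p :: "'n \<Rightarrow> 'n"
  proof -
    have "c ^ card S = (\<Prod>i\<in>S. c)" by simp
    also have "\<dots> dvd (\<Prod>i\<in>S. A $ i $ p i)"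
      by (rule prod_dvd_prod) (rule assms)
    also have "\<dots> dvd (\<Prod>i\<in>UNIV. A $ i $ p i)"
      using prod.subset_diff[of S UNIV "\<lambda>i. A $ i $ p i"] by simp
    finally show ?thesis .
  qed
  then show ?thesis
    unfolding det_def by (intro dvd_sum dvd_mult)
qed

lemma degree_dominating_vertex:
  fixes E :: "'n::finite \<Rightarrow> 'n \<Rightarrow> bool"
  assumes "simple_graph E" and "\<forall>u. u \<noteq> v \<longrightarrow> E v u"
  shows "degree E v = CARD('n) - 1"
proof -
  have "{u. E v u} = UNIV - {v}"
    using assms by (auto simp: simple_graph_def)
  then show ?thesis
    by (simp add: degree_def card_Diff_singleton)
qed

lemma all_ones_plus_laplacian_dominating_row:
  fixes E :: "'n::finite \<Rightarrow> 'n \<Rightarrow> bool"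
  assumes "simple_graph E" and "\<forall>u. u \<noteq> v \<longrightarrow> E v u"
  shows "(all_ones + laplacian E) $ v $ j = (if j = v then int CARD('n) else 0)"
proof -
  have "\<not> E v v" using assms(1) by (simp add: simple_graph_def)
  moreover have "CARD('n) \<ge> 1" by (simp add: Suc_leI)
  ultimately show ?thesis
    using assms degree_dominating_vertex[OF assms]
    by (simp add: all_ones_def laplacian_def degree_matrix_def adj_matrix_def of_nat_diff)
qed

theorem lemma3p6:
  fixes E :: "'n::finite \<Rightarrow> 'n \<Rightarrow> bool" and vs :: "'n list"
  assumes "simple_graph E"
    and "distinct vs"
    and "\<forall>v \<in> set vs. \<forall>u. u \<noteq> v \<longrightarrow> E v u"
  shows "(int CARD('n)) ^ length vs dvd det (all_ones + laplacian E)"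
proof -
  have "int CARD('n) dvd (all_ones + laplacian E) $ v $ j" if "v \<in> set vs" for v j
    using all_ones_plus_laplacian_dominating_row[OF assms(1)] assms(3) that by simp
  then have "int CARD('n) ^ card (set vs) dvd det (all_ones + laplacian E)"
    by (rule pow_card_dvd_det_if_rows_dvd)
  then show ?thesis
    using assms(2) by (simp add: distinct_card)
qed

end
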